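(* Let $B>0$ and for $t>0$, $x>0$ define $$\tilde{y}_{2}(t,x)=\frac{2(Bt)^{1/4}}{\pi}\int_{0}^{\infty}\frac{e^{-w^{4}}}{w^{2}}\left(\int_{0}^{w^{4}}e^{s}s^{-1/2}\,ds\right)\cos\!\Big(\frac{x}{(Bt)^{1/4}}w\Big)\,dw.$$ Then $\tilde{y}_{2}(t,x)\to0$ as $x\to\infty$ for each fixed $t>0$, and $\tilde{y}_{2}(t,x)\to0$ as $t\to0$ for each fixed $x>0$. *)

theory Defs
  imports "HOL-Analysis.Analysis"
begin

text \<open>Integrals are Henstock-Kurzweil
  integrals (the integrands are absolutely integrable, so these agree with the
  Lebesgue/improper integrals of the paper).\<close>
definition y2tilde :: "real \<Rightarrow> real \<Rightarrow> real \<Rightarrow> real" where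
  "y2tilde B t x =
     2 * (B * t) powr (1/4) / pi *
     integral {0..} (\<lambda>w. exp (-(w ^ 4)) / w ^ 2
        * integral {0..w ^ 4} (\<lambda>s. exp s * s powr (-1/2))
        * cos (x / (B * t) powr (1/4) * w))"

end

theory Submission
  imports Defs "HOL-Real_Asymp.Real_Asymp"
begin

text \<open>Substituting s = w^4 v turns the factor e^(-w^4) w^(-2) \<integral>_0^(w^4) e^s s^(-1/2) ds of
  the integrand into weight (w^4), where weight u = \<integral>_0^1 e^(-u(1-v)) v^(-1/2) dv is
  nonincreasing in u \<ge> 0 with 0 \<le> weight u \<le> weight 0 = 2. By the second mean value
  theorem, the integral of weight (w^4) cos (L w) over any [0,b] is then O(1/L) uniformly in b,
  hence so is the improper integral. With L = x / (Bt)^(1/4) this gives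
  |y2tilde B t x| \<le> 16 sqrt (Bt) / (\<pi> x), which tends to 0 in both limits.\<close>

lemma integrable_on_mono_mult:
  fixes f g :: "real \<Rightarrow> real"
  assumes "f integrable_on {a..b}" "a \<le> b"
    and "\<And>x y. \<lbrakk>a \<le> x; x \<le> y; y \<le> b\<rbrakk> \<Longrightarrow> g x \<le> g y"
  shows "(\<lambda>x. g x * f x) integrable_on {a..b}"
  using second_mean_value_theorem_full[where g=g, OF assms] unfolding integrable_on_def by blast

lemma has_integral_antimono_mult_bound:
  fixes f g :: "real \<Rightarrow> real"
  assumes f: "f integrable_on {a..b}" and "a \<le> b"
    and g_antimono: "\<And>x y. \<lbrakk>a \<le> x; x \<le> y; y \<le> b\<rbrakk> \<Longrightarrow> g y \<le> g x"
    and g_bound: "\<And>x. \<lbrakk>a \<le> x; x \<le> b\<rbrakk> \<Longrightarrow> \<bar>g x\<bar> \<le> M"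
    and f_bound: "\<And>c d. \<lbrakk>a \<le> c; c \<le> d; d \<le> b\<rbrakk> \<Longrightarrow> \<bar>integral {c..d} f\<bar> \<le> K"
  shows "\<exists>J. ((\<lambda>x. g x * f x) has_integral J) {a..b} \<and> \<bar>J\<bar> \<le> 2 * M * K"
proof -
  obtain c where c: "c \<in> {a..b}" and neg_has_integral: "((\<lambda>x. - g x * f x) has_integral
      (- g a * integral {a..c} f + - g b * integral {c..b} f)) {a..b}"
    using second_mean_value_theorem_full[where g="\<lambda>x. - g x", OF f \<open>a \<le> b\<close>] g_antimono
    by (metis neg_le_iff_le)
  define J where "J = g a * integral {a..c} f + g b * integral {c..b} f"
  have "((\<lambda>x. g x * f x) has_integral J) {a..b}"
    using has_integral_neg[OF neg_has_integral] by (simp add: J_def add.commute)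
  moreover have "\<bar>J\<bar> \<le> M * K + M * K"
    unfolding J_def using c \<open>a \<le> b\<close>
    by (intro order.trans[OF abs_triangle_ineq] add_mono)
       (auto simp: abs_mult intro!: mult_mono g_bound f_bound order.trans[OF abs_ge_zero g_bound])
  ultimately show ?thesis
    by (metis mult_2 mult.assoc)
qed

lemma abs_integral_atLeast_le:
  fixes f :: "real \<Rightarrow> real"
  assumes bounded: "\<And>b. a \<le> b \<Longrightarrow> \<exists>J. (f has_integral J) {a..b} \<and> \<bar>J\<bar> \<le> K"
  shows "\<bar>integral {a..} f\<bar> \<le> K"
proof (cases "f integrable_on {a..}")
  case False
  have "0 \<le> K"
    using bounded[of a] has_integral_unique[OF has_integral_refl(2)] by fastforce
  with False show ?thesis by (simp add: not_integrable_integral)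
next
  case True
  define I where "I = integral {a..} f"
  have I: "(f has_integral I) {a..}"
    using True by (simp add: I_def integrable_integral)
  show ?thesis unfolding I_def[symmetric]
  proof (rule field_le_epsilon)
    fix e :: real assume "e > 0"
    then obtain R where "R > 0" and R: "\<And>c d. ball 0 R \<subseteq> cbox c d \<Longrightarrow>
        \<exists>z. ((\<lambda>x. if x \<in> {a..} then f x else 0) has_integral z) (cbox c d) \<and> norm (z - I) < e"
      using I unfolding has_integral'[of f I] by blast
    define b where "b = R + \<bar>a\<bar>"
    have "ball 0 R \<subseteq> cbox (-b) b"
      by (auto simp: b_def dist_real_def)
    then obtain z where z: "((\<lambda>x. if x \<in> {a..} then f x else 0) has_integral z) (cbox (-b) b)"
      and "norm (z - I) < e" using R by blast
    have "a \<le> b"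
      using \<open>R > 0\<close> abs_ge_self[of a] unfolding b_def by linarith
    then obtain J where J: "(f has_integral J) {a..b}" and "\<bar>J\<bar> \<le> K"
      using bounded by blast
    have "((\<lambda>x. if x \<in> cbox a b then f x else 0) has_integral J) (cbox (-b) b)"
      using J \<open>R > 0\<close> by (intro has_integral_restrict_closed_subinterval) (auto simp: b_def)
    then have "((\<lambda>x. if x \<in> {a..} then f x else 0) has_integral J) (cbox (-b) b)"
      by (rule has_integral_eq[rotated]) auto
    then have "z = J"
      using z by (rule has_integral_unique[rotated])
    with \<open>norm (z - I) < e\<close> \<open>\<bar>J\<bar> \<le> K\<close> show "\<bar>I\<bar> \<le> K + e" by auto
  qed
qed

lemma abs_integral_cos_le:
  fixes L :: real
  assumes "L > 0" "a \<le> b"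
  shows "\<bar>integral {a..b} (\<lambda>w. cos (L * w))\<bar> \<le> 2 / L"
proof -
  have "((\<lambda>w. cos (L * w)) has_integral (sin (L * b) / L - sin (L * a) / L)) {a..b}"
  proof (rule fundamental_theorem_of_calculus[OF \<open>a \<le> b\<close>])
    fix x
    have "((\<lambda>x. sin (L * x) / L) has_real_derivative cos (L * x) * (L * 1) / L) (at x within {a..b})"
      by (auto intro!: derivative_eq_intros)
    then show "((\<lambda>x. sin (L * x) / L) has_vector_derivative cos (L * x)) (at x within {a..b})"
      using \<open>L > 0\<close> by (simp add: has_real_derivative_iff_has_vector_derivative)
  qed
  then have "integral {a..b} (\<lambda>w. cos (L * w)) = (sin (L * b) - sin (L * a)) / L"
    by (simp add: integral_unique diff_divide_distrib)
  moreover have "\<bar>sin (L * b) - sin (L * a)\<bar> \<le> 2"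
    using abs_sin_le_one[of "L * b"] abs_sin_le_one[of "L * a"] by linarith
  ultimately show ?thesis
    using \<open>L > 0\<close> by (simp add: abs_divide divide_right_mono)
qed

lemma powr_minus_half:
  fixes u :: real
  assumes "0 \<le> u"
  shows "u powr (-1/2) = 1 / sqrt u"
proof -
  have "u powr (-1/2) = 1 / u powr (1/2)"
    using powr_minus_divide[of u "1/2"] by simp
  with assms show ?thesis
    by (simp add: powr_half_sqrt)
qed

lemma has_integral_powr_minus_half: "((\<lambda>v::real. v powr (-1/2)) has_integral 2) {0..1}"
  using has_integral_powr_from_0[of "-1/2" 1] by simp

definition weight :: "real \<Rightarrow> real" where
  "weight u = integral {0..1} (\<lambda>v. exp (- u * (1 - v)) * v powr (-1/2))"

lemma weight_integrand_integrable:
  fixes u :: real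
  assumes "0 \<le> u"
  shows "(\<lambda>v. exp (- u * (1 - v)) * v powr (-1/2)) integrable_on {0..1}"
proof (rule integrable_on_mono_mult)
  show "(\<lambda>v::real. v powr (-1/2)) integrable_on {0..1}"
    using has_integral_powr_minus_half by blast
qed (use assms in \<open>auto intro: mult_left_mono\<close>)

lemma weight_zero: "weight 0 = 2"
  using has_integral_powr_minus_half by (simp add: weight_def integral_unique)

lemma weight_nonneg: "0 \<le> u \<Longrightarrow> 0 \<le> weight u"
  unfolding weight_def by (rule integral_nonneg[OF weight_integrand_integrable]) auto

lemma weight_antimono:
  assumes "0 \<le> u" "u \<le> u'"
  shows "weight u' \<le> weight u"
  unfolding weight_def
proof (rule integral_le[OF weight_integrand_integrable weight_integrand_integrable])
  fix v :: real assume "v \<in> {0..1}"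
  then have "- u' * (1 - v) \<le> - u * (1 - v)"
    using assms by (simp add: mult_right_mono)
  then show "exp (- u' * (1 - v)) * v powr (-1/2) \<le> exp (- u * (1 - v)) * v powr (-1/2)"
    by (simp add: mult_right_mono)
qed (use assms in auto)

lemma abs_weight_le: "0 \<le> u \<Longrightarrow> \<bar>weight u\<bar> \<le> 2"
  using weight_antimono[of 0 u] weight_zero weight_nonneg[of u] by simp

lemma weight_eq:
  assumes "u > 0"
  shows "exp (- u) / sqrt u * integral {0..u} (\<lambda>s. exp s * s powr (-1/2)) = weight u"
proof -
  have "(\<lambda>x. x / u) ` {0..u} = {0..1}"
    using assms by simp
  then have "integral {0..u} (\<lambda>s. exp s * s powr (-1/2))
      = u * integral {0..1} (\<lambda>v. exp (u * v) * (u * v) powr (-1/2))"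
    using integral_stretch_real[of u 0 u "\<lambda>s. exp s * s powr (-1/2)"] assms by simp
  then have "exp (- u) / sqrt u * integral {0..u} (\<lambda>s. exp s * s powr (-1/2))
      = integral {0..1} (\<lambda>v. exp (- u) / sqrt u * (u * (exp (u * v) * (u * v) powr (-1/2))))"
    by simp
  also have "\<dots> = weight u"
    unfolding weight_def
  proof (rule integral_cong)
    fix v :: real assume "v \<in> {0..1}"
    have "- u * (1 - v) = - u + u * v"
      by (simp add: algebra_simps)
    then have exp_eq: "exp (- u * (1 - v)) = exp (- u) * exp (u * v)"
      by (simp only: exp_add)
    have powr_eq: "(u * v) powr (-1/2) = 1 / sqrt u * v powr (-1/2)"
      using assms \<open>v \<in> {0..1}\<close> by (simp only: powr_mult powr_minus_half)
    show "exp (- u) / sqrt u * (u * (exp (u * v) * (u * v) powr (-1/2)))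
        = exp (- u * (1 - v)) * v powr (-1/2)"
      unfolding exp_eq powr_eq using assms by (simp add: field_simps)
  qed
  finally show ?thesis .
qed

lemma weight_power4_eq:
  fixes w :: real
  assumes "w \<noteq> 0"
  shows "exp (-(w ^ 4)) / w ^ 2 * integral {0..w ^ 4} (\<lambda>s. exp s * s powr (-1/2)) = weight (w ^ 4)"
proof -
  have "sqrt (w ^ 4) = w ^ 2"
    using real_sqrt_abs[of "w ^ 2"] by (simp flip: power_mult)
  then show ?thesis
    using weight_eq[of "w ^ 4"] assms by simp
qed

lemma abs_integral_y2_integrand_le:
  fixes L :: real
  assumes "L > 0"
  shows "\<bar>integral {0..} (\<lambda>w. exp (-(w ^ 4)) / w ^ 2
      * integral {0..w ^ 4} (\<lambda>s. exp s * s powr (-1/2)) * cos (L * w))\<bar> \<le> 8 / L"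
proof (rule abs_integral_atLeast_le)
  fix b :: real assume "0 \<le> b"
  have "\<exists>J. ((\<lambda>w. weight (w ^ 4) * cos (L * w)) has_integral J) {0..b} \<and> \<bar>J\<bar> \<le> 2 * 2 * (2 / L)"
  proof (rule has_integral_antimono_mult_bound)
    show "(\<lambda>w. cos (L * w)) integrable_on {0..b}"
      by (intro integrable_continuous_interval continuous_intros)
  qed (use \<open>0 \<le> b\<close> assms in \<open>auto intro: weight_antimono power_mono abs_weight_le abs_integral_cos_le\<close>)
  then obtain J where J: "((\<lambda>w. weight (w ^ 4) * cos (L * w)) has_integral J) {0..b}"
    and "\<bar>J\<bar> \<le> 8 / L"
    by auto
  have "((\<lambda>w. exp (-(w ^ 4)) / w ^ 2
      * integral {0..w ^ 4} (\<lambda>s. exp s * s powr (-1/2)) * cos (L * w)) has_integral J) {0..b}"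
    by (rule has_integral_spike_finite[of "{0}", OF _ _ J]) (auto simp flip: weight_power4_eq)
  with \<open>\<bar>J\<bar> \<le> 8 / L\<close> show "\<exists>J. ((\<lambda>w. exp (-(w ^ 4)) / w ^ 2
      * integral {0..w ^ 4} (\<lambda>s. exp s * s powr (-1/2)) * cos (L * w)) has_integral J) {0..b}
      \<and> \<bar>J\<bar> \<le> 8 / L"
    by blast
qed

lemma abs_y2tilde_le:
  assumes "B > 0" "t > 0" "x > 0"
  shows "\<bar>y2tilde B t x\<bar> \<le> 16 * sqrt (B * t) / (pi * x)"
proof -
  define c where "c = (B * t) powr (1/4)"
  have "c > 0"
    using assms by (simp add: c_def)
  have "c\<^sup>2 = (B * t) powr (1/2)"
    using assms by (simp add: c_def powr_power)
  then have "c\<^sup>2 = sqrt (B * t)"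
    using assms by (simp add: powr_half_sqrt)
  have "\<bar>y2tilde B t x\<bar> = 2 * c / pi * \<bar>integral {0..} (\<lambda>w. exp (-(w ^ 4)) / w ^ 2
      * integral {0..w ^ 4} (\<lambda>s. exp s * s powr (-1/2)) * cos (x / c * w))\<bar>"
    unfolding y2tilde_def c_def[symmetric] using \<open>c > 0\<close> by (simp add: abs_mult)
  also have "\<dots> \<le> 2 * c / pi * (8 / (x / c))"
    using abs_integral_y2_integrand_le[of "x / c"] \<open>c > 0\<close> assms by (intro mult_left_mono) auto
  also have "\<dots> = 16 * c\<^sup>2 / (pi * x)"
    by (simp add: field_simps power2_eq_square)
  finally show ?thesis
    using \<open>c\<^sup>2 = sqrt (B * t)\<close> by simp
qed

theorem lemma6:
  fixes B :: real
  assumes "B > 0"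
  shows "(\<forall>t>0. ((\<lambda>x. y2tilde B t x) \<longlongrightarrow> 0) at_top)
       \<and> (\<forall>x>0. ((\<lambda>t. y2tilde B t x) \<longlongrightarrow> 0) (at_right 0))"
proof safe
  fix t :: real assume "t > 0"
  have "\<forall>\<^sub>F x in at_top. norm (y2tilde B t x) \<le> 16 * sqrt (B * t) / (pi * x)"
    using eventually_gt_at_top[of 0] by eventually_elim (use assms \<open>t > 0\<close> abs_y2tilde_le in auto)
  moreover have "((\<lambda>x. 16 * sqrt (B * t) / (pi * x)) \<longlongrightarrow> 0) at_top"
    by real_asymp
  ultimately show "((\<lambda>x. y2tilde B t x) \<longlongrightarrow> 0) at_top"
    by (rule Lim_null_comparison)
next
  fix x :: real assume "x > 0"
  have "\<forall>\<^sub>F t in at_right 0. norm (y2tilde B t x) \<le> 16 * sqrt (B * t) / (pi * x)"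
    using eventually_at_right_less[of 0] by eventually_elim (use assms \<open>x > 0\<close> abs_y2tilde_le in auto)
  moreover have "((\<lambda>t. 16 * sqrt (B * t) / (pi * x)) \<longlongrightarrow> 16 * sqrt (B * 0) / (pi * x)) (at_right 0)"
    using \<open>x > 0\<close> by (intro tendsto_intros) auto
  ultimately show "((\<lambda>t. y2tilde B t x) \<longlongrightarrow> 0) (at_right 0)"
    by (simp add: Lim_null_comparison)
qed

end
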